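(* Let $p,q\geq 2$ be relatively prime integers, let $k\geq 2$ and $t>0$ be integers, and let $w_1,w_2\in A_{pq}^k$. Then (1) if $\mathrm{int}(w_1)<q^t$ then $\mathrm{int}(G_{p,q}(w_1))<q^{t-1}$; and (2) if $\mathrm{int}(w_2)\equiv\mathrm{int}(w_1)+q^t\pmod{(pq)^k}$ then $\mathrm{int}(G_{p,q}(w_2))\equiv\mathrm{int}(G_{p,q}(w_1))+q^{t-1}\pmod{(pq)^{k-1}}$.
   Context: For an integer $n>1$, $A_n=\{0,\dots,n-1\}$, and $A_n^k$ is the set of words of length $k$. Define $g_{p,q}:A_{pq}\times A_{pq}\to A_{pq}$ by writing $x=x_1q+x_0$, $y=y_1q+y_0$ with $x_0,y_0\in A_q$, $x_1,y_1\in A_p$ (uniquely), and $g_{p,q}(x,y)=x_0p+y_1$. For a word $w=w(1)\cdots w(m)$ with $m\geq2$, $G_{p,q}(w)=u(1)\cdots u(m-1)$ where $u(i)=g_{p,q}(w(i),w(i+1))$. For a nonempty word $w=w(1)\cdots w(m)$ over $A_{pq}$, $\mathrm{int}(w)=\sum_{i=0}^{m-1}w(m-i)(pq)^i$. *)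

theory Defs
  imports Main "HOL-Number_Theory.Cong"
begin

definition word_over :: "nat \<Rightarrow> nat \<Rightarrow> nat list \<Rightarrow> bool" where
  "word_over n k w \<longleftrightarrow> length w = k \<and> (\<forall>a\<in>set w. a < n)"

definition gpq :: "nat \<Rightarrow> nat \<Rightarrow> nat \<Rightarrow> nat \<Rightarrow> nat" where
  "gpq p q x y = (x mod q) * p + (y div q)"

definition Gpq :: "nat \<Rightarrow> nat \<Rightarrow> nat list \<Rightarrow> nat list" where
  "Gpq p q w = map (\<lambda>i. gpq p q (w ! i) (w ! (i + 1))) [0..<length w - 1]"

(* int(w) = sum_{i=0}^{m-1} w(m-i) (pq)^i  (1-indexed w; list index m-1-i) *)
definition wint :: "nat \<Rightarrow> nat \<Rightarrow> nat list \<Rightarrow> nat" where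
  "wint p q w = (\<Sum>i<length w. (w ! (length w - 1 - i)) * (p * q) ^ i)"

end

theory Submission
  imports Defs
begin

(* Write each letter as x = x1 q + x0. In G(w) the remainder x0 of a letter is the high part
   (x0 p) of the letter it produces and its quotient x1 the low part of the letter to its left,
   so int(w) = q int(G(w)) up to the quotient of the first letter, shifted out at the top, and
   the remainder of the last letter, shifted out at the bottom. Both parts of the theorem are
   read off this identity: the bottom remainder is smaller than q, and the top term is a
   multiple of the modulus (pq)^(k-1). *)

lemma wint_Nil [simp]: "wint p q [] = 0"
  unfolding wint_def by simp

lemma wint_Cons: "wint p q (a # w) = a * (p * q) ^ length w + wint p q w"
proof -
  have "(\<Sum>i<length w. (a # w) ! (length w - i) * (p * q) ^ i)
      = (\<Sum>i<length w. w ! (length w - 1 - i) * (p * q) ^ i)"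
  proof (rule sum.cong)
    fix i assume "i \<in> {..<length w}"
    then have "length w - i = Suc (length w - 1 - i)" by auto
    then show "(a # w) ! (length w - i) * (p * q) ^ i = w ! (length w - 1 - i) * (p * q) ^ i"
      by simp
  qed simp
  then show ?thesis unfolding wint_def by simp
qed

lemma Gpq_singleton [simp]: "Gpq p q [a] = []"
  unfolding Gpq_def by simp

lemma Gpq_Cons_Cons: "Gpq p q (a # b # w) = gpq p q a b # Gpq p q (b # w)"
  unfolding Gpq_def by (simp add: upt_conv_Cons map_Suc_upt[symmetric] del: upt_Suc)

lemma length_Gpq: "length (Gpq p q w) = length w - 1"
  unfolding Gpq_def by simp

lemma wint_eq_wint_Gpq:
  assumes "w \<noteq> []"
  shows "wint p q w
    = q * (wint p q (Gpq p q w) + hd w div q * (p * q) ^ (length w - 1)) + last w mod q"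
  using assms
proof (induction w)
  case Nil
  then show ?case by simp
next
  case (Cons a v)
  show ?case
  proof (cases v)
    case Nil
    then show ?thesis by (simp add: wint_Cons)
  next
    case (Cons b v')
    then have IH: "wint p q v
        = q * (wint p q (Gpq p q v) + b div q * (p * q) ^ (length v - 1)) + last v mod q"
      using Cons.IH by simp
    have top: "q * (gpq p q a b * (p * q) ^ (length v - 1))
        = a mod q * (p * q) ^ length v + q * (b div q * (p * q) ^ (length v - 1))"
      using Cons by (simp add: gpq_def algebra_simps)
    have "wint p q (a # v)
        = a mod q * (p * q) ^ length v + q * (a div q * (p * q) ^ length v) + wint p q v"
      by (simp add: wint_Cons flip: distrib_right mult.assoc)
    also have "\<dots> = q * (gpq p q a b * (p * q) ^ (length v - 1) + wint p q (Gpq p q v)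
        + a div q * (p * q) ^ length v) + last v mod q"
      unfolding IH distrib_left[of q] top by simp
    also have "\<dots> = q * (wint p q (Gpq p q (a # v)) + a div q * (p * q) ^ length v)
        + last (a # v) mod q"
      using Cons by (simp add: Gpq_Cons_Cons wint_Cons length_Gpq)
    finally show ?thesis using Cons by simp
  qed
qed

lemma wint_Gpq_less_pow:
  assumes "wint p q w < q ^ t" and "t > 0"
  shows "wint p q (Gpq p q w) < q ^ (t - 1)"
proof (cases "w = []")
  case True
  have "q > 0"
    using assms by (metis gr0I less_nat_zero_code power_0_left)
  with True show ?thesis by (simp add: Gpq_def)
next
  case False
  have "q * wint p q (Gpq p q w) \<le> wint p q w"
    using wint_eq_wint_Gpq[OF False, of p q] by (metis add_mult_distrib2 le_add1 le_add2 order_trans)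
  also have "\<dots> < q * q ^ (t - 1)"
    using assms by (simp add: power_eq_if)
  finally show ?thesis by simp
qed

lemma cong_mult_add_cancel_nat:
  fixes q m a b r s :: nat
  assumes "[q * a + r = q * b + s] (mod (q * m))" and "r < q" and "s < q"
  shows "[a = b] (mod m)"
proof -
  have "(q * a + r) mod (q * m) = q * (a mod m) + r"
    and "(q * b + s) mod (q * m) = q * (b mod m) + s"
    using assms(2,3) by (simp_all add: mod_mult2_eq)
  then have "q * (a mod m) + r = q * (b mod m) + s"
    using assms(1) by (simp add: cong_def)
  then have "(q * (a mod m) + r) div q = (q * (b mod m) + s) div q"
    by simp
  then have "a mod m = b mod m"
    using assms(2,3) by simp
  then show ?thesis by (simp add: cong_def)
qed

lemma wint_Gpq_cong_add_pow:
  assumes "length w1 = k" and "length w2 = k" and "k > 0" and "q > 0" and "t > 0"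
    and "[wint p q w2 = wint p q w1 + q ^ t] (mod ((p * q) ^ k))"
  shows "[wint p q (Gpq p q w2) = wint p q (Gpq p q w1) + q ^ (t - 1)] (mod ((p * q) ^ (k - 1)))"
proof -
  define N where "N = (p * q) ^ (k - 1)"
  have ne: "w1 \<noteq> []" "w2 \<noteq> []"
    using assms(1-3) by auto
  have modulus: "(p * q) ^ k = q * (p * N)"
    using assms(3) by (simp add: N_def power_eq_if)
  have "wint p q w1 + q ^ t
      = q * (wint p q (Gpq p q w1) + q ^ (t - 1) + hd w1 div q * N) + last w1 mod q"
    using wint_eq_wint_Gpq[OF ne(1), of p q] assms(1,5)
    by (simp add: N_def power_eq_if algebra_simps)
  moreover have "wint p q w2 = q * (wint p q (Gpq p q w2) + hd w2 div q * N) + last w2 mod q"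
    using wint_eq_wint_Gpq[OF ne(2), of p q] assms(2) by (simp add: N_def)
  ultimately have "[wint p q (Gpq p q w2) + hd w2 div q * N
      = wint p q (Gpq p q w1) + q ^ (t - 1) + hd w1 div q * N] (mod (p * N))"
    using assms(4,6) modulus by (metis cong_mult_add_cancel_nat mod_less_divisor)
  then have "[wint p q (Gpq p q w2) + hd w2 div q * N
      = wint p q (Gpq p q w1) + q ^ (t - 1) + hd w1 div q * N] (mod N)"
    by (rule cong_dvd_modulus_nat) simp
  then show ?thesis
    unfolding N_def cong_def by simp
qed

theorem lemma9:
  fixes p q k t :: nat and w1 w2 :: "nat list"
  assumes "p \<ge> 2" and "q \<ge> 2" and "coprime p q"
    and "k \<ge> 2" and "t > 0"
    and "word_over (p * q) k w1" and "word_over (p * q) k w2"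
  shows "(wint p q w1 < q ^ t \<longrightarrow> wint p q (Gpq p q w1) < q ^ (t - 1))
       \<and> ([wint p q w2 = wint p q w1 + q ^ t] (mod ((p * q) ^ k)) \<longrightarrow>
          [wint p q (Gpq p q w2) = wint p q (Gpq p q w1) + q ^ (t - 1)] (mod ((p * q) ^ (k - 1))))"
proof -
  have "length w1 = k" "length w2 = k"
    using assms(6,7) by (simp_all add: word_over_def)
  then show ?thesis
    using assms(2,4,5) wint_Gpq_less_pow wint_Gpq_cong_add_pow[of w1 k w2 q t p] by simp
qed

end
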